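(* In the Standing Setting, let $(p,B)$ be a flag with $p=(\alpha,\beta)$, let $c$ be the number of points of $B$ whose first coordinate is $\alpha$, and $d$ the number of points of $B$ whose second coordinate is $\beta$ (both counts include $p$). Then $k=\frac{(c+d-2)(\omega+1)}{2}+1$.
   Context: Standing Setting: $\mathcal{D}=(\Omega,\mathcal{B})$ is a non-trivial $2$-$(v,k,\lambda)$ design (every two distinct points in exactly $\lambda$ blocks, blocks of size $k$, $2<k<v$) with $b$ blocks and replication number $r$, satisfying $\lambda\ge (r,\lambda)^2$. $G\le\mathrm{Aut}(\mathcal{D})$ is flag-transitive (transitive on pairs $(p,B)$ with $p\in B\in\mathcal{B}$). Moreover $\Omega=\Delta\times\Delta$ with $|\Delta|=\omega\ge 5$ odd, so $v=\omega^2$, and $T\times T\trianglelefteq G\le T_0\wr \mathbb{Z}_2$ acting in product action (the $\mathbb{Z}_2$ interchanging the two coordinates), where $T_0\le\mathrm{Sym}(\Delta)$ is $2$-transitive with nonabelian simple socle $T$; $G$ has rank $3$ on $\Omega$. *)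

theory Defs
  imports "HOL-Algebra.Algebra"
begin

text \<open>A permutation group on a set S is a subgroup of BijGroup S; the subgroup
  with carrier H is the group (BijGroup S)(carrier := H).\<close>

definition minimal_normal :: "('g, 'b) monoid_scheme \<Rightarrow> 'g set \<Rightarrow> bool" where
  "minimal_normal H N \<longleftrightarrow> N \<lhd> H \<and> N \<noteq> {\<one>\<^bsub>H\<^esub>} \<and>
     (\<forall>M. M \<lhd> H \<and> M \<subseteq> N \<longrightarrow> M = {\<one>\<^bsub>H\<^esub>} \<or> M = N)"

definition socle :: "('g, 'b) monoid_scheme \<Rightarrow> 'g set" where
  "socle H = generate H (\<Union>{N. minimal_normal H N})"

definition two_transitive :: "'a set \<Rightarrow> ('a \<Rightarrow> 'a) set \<Rightarrow> bool" where
  "two_transitive S H \<longleftrightarrow>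
     (\<forall>a\<in>S. \<forall>b\<in>S. \<forall>c\<in>S. \<forall>d\<in>S. a \<noteq> b \<and> c \<noteq> d \<longrightarrow> (\<exists>g\<in>H. g a = c \<and> g b = d))"

definition transitive_on :: "'a set \<Rightarrow> ('a \<Rightarrow> 'a) set \<Rightarrow> bool" where
  "transitive_on S H \<longleftrightarrow> (\<forall>a\<in>S. \<forall>b\<in>S. \<exists>g\<in>H. g a = b)"

definition orbitals :: "'a set \<Rightarrow> ('a \<Rightarrow> 'a) set \<Rightarrow> ('a \<times> 'a) set set" where
  "orbitals S H = (\<lambda>(a, b). {(g a, g b) | g. g \<in> H}) ` (S \<times> S)"

definition has_rank :: "'a set \<Rightarrow> ('a \<Rightarrow> 'a) set \<Rightarrow> nat \<Rightarrow> bool" where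
  "has_rank S H n \<longleftrightarrow> transitive_on S H \<and> card (orbitals S H) = n"

definition prod_perm :: "'a set \<Rightarrow> ('a \<Rightarrow> 'a) \<Rightarrow> ('a \<Rightarrow> 'a) \<Rightarrow> ('a \<times> 'a \<Rightarrow> 'a \<times> 'a)" where
  "prod_perm D g h = (\<lambda>p \<in> D \<times> D. (g (fst p), h (snd p)))"

definition swap_perm :: "'a set \<Rightarrow> ('a \<times> 'a \<Rightarrow> 'a \<times> 'a)" where
  "swap_perm D = (\<lambda>p \<in> D \<times> D. (snd p, fst p))"

definition prod_group :: "'a set \<Rightarrow> ('a \<Rightarrow> 'a) set \<Rightarrow> ('a \<Rightarrow> 'a) set \<Rightarrow> ('a \<times> 'a \<Rightarrow> 'a \<times> 'a) set" where
  "prod_group D H K = {prod_perm D g h | g h. g \<in> H \<and> h \<in> K}"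

definition wreath2_product_action :: "'a set \<Rightarrow> ('a \<Rightarrow> 'a) set \<Rightarrow> ('a \<times> 'a \<Rightarrow> 'a \<times> 'a) set" where
  "wreath2_product_action D H =
     prod_group D H H \<union> {compose (D \<times> D) x (swap_perm D) | x. x \<in> prod_group D H H}"

definition design_2 :: "'p set \<Rightarrow> 'p set set \<Rightarrow> nat \<Rightarrow> nat \<Rightarrow> nat \<Rightarrow> bool" where
  "design_2 P Bs v k lam \<longleftrightarrow> finite P \<and> card P = v \<and>
     (\<forall>B\<in>Bs. B \<subseteq> P \<and> card B = k) \<and>
     (\<forall>x\<in>P. \<forall>y\<in>P. x \<noteq> y \<longrightarrow> card {B \<in> Bs. x \<in> B \<and> y \<in> B} = lam)"

definition replication :: "'p set \<Rightarrow> 'p set set \<Rightarrow> nat \<Rightarrow> bool" where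
  "replication P Bs r \<longleftrightarrow> (\<forall>x\<in>P. card {B \<in> Bs. x \<in> B} = r)"

definition is_automorphism :: "'p set \<Rightarrow> 'p set set \<Rightarrow> ('p \<Rightarrow> 'p) \<Rightarrow> bool" where
  "is_automorphism P Bs g \<longleftrightarrow> g \<in> Bij P \<and> (\<lambda>B. g ` B) ` Bs = Bs"

definition flag_transitive :: "'p set \<Rightarrow> 'p set set \<Rightarrow> ('p \<Rightarrow> 'p) set \<Rightarrow> bool" where
  "flag_transitive P Bs H \<longleftrightarrow>
     (\<forall>x B y C. x \<in> B \<and> B \<in> Bs \<and> y \<in> C \<and> C \<in> Bs \<longrightarrow> (\<exists>g\<in>H. g x = y \<and> g ` B = C))"

end

theory Submission
  imports Defs
begin

text \<open>Every point-stabiliser-invariant set \<Gamma> of points other than p meets the blocks through p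
  in equally many points, so double counting the flags (x, C) with x \<in> \<Gamma> and p \<in> C gives
  \<lambda> |\<Gamma>| = r |B \<inter> \<Gamma>|. The wreath product in product action preserves the relation
  "same row or same column", so this applies to the 2(\<omega> - 1) rook's-graph neighbours of p
  and to its (\<omega> - 1) squared non-neighbours. The two equations force
  |B \<inter> non-neighbours| = (\<omega> - 1)/2 \<cdot> |B \<inter> neighbours|; since |B \<inter> neighbours| = (c - 1) + (d - 1)
  and k = 1 + |B \<inter> neighbours| + |B \<inter> non-neighbours|, the formula follows.\<close>

lemma sum_card_incidences:
  assumes "finite Bs" "finite \<Gamma>"
  shows "(\<Sum>x\<in>\<Gamma>. card {C\<in>Bs. x \<in> C}) = (\<Sum>C\<in>Bs. card (C \<inter> \<Gamma>))"
proof -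
  have "(\<Sum>x\<in>\<Gamma>. card {C\<in>Bs. x \<in> C}) = (\<Sum>x\<in>\<Gamma>. \<Sum>C\<in>Bs. if x \<in> C then 1 else 0)"
    using assms by (simp add: sum.inter_filter[symmetric])
  also have "\<dots> = (\<Sum>C\<in>Bs. \<Sum>x\<in>\<Gamma>. if x \<in> C then 1 else 0)"
    by (rule sum.swap)
  also have "\<dots> = (\<Sum>C\<in>Bs. card {x\<in>\<Gamma>. x \<in> C})"
    using assms by (simp add: sum.inter_filter[symmetric])
  also have "\<dots> = (\<Sum>C\<in>Bs. card (C \<inter> \<Gamma>))"
    by (intro sum.cong refl arg_cong[where f=card]) blast
  finally show ?thesis .
qed

lemma card_image_inter_invariant:
  assumes "inj_on g P" "B \<subseteq> P"
    and "\<And>x. x \<in> P \<Longrightarrow> g x \<in> \<Gamma> \<longleftrightarrow> x \<in> \<Gamma>"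
  shows "card (g ` B \<inter> \<Gamma>) = card (B \<inter> \<Gamma>)"
proof -
  have "g ` B \<inter> \<Gamma> = g ` (B \<inter> \<Gamma>)"
    using assms(2,3) by auto
  moreover have "inj_on g (B \<inter> \<Gamma>)"
    by (rule inj_on_subset[OF assms(1)]) (use assms(2) in blast)
  ultimately show ?thesis
    by (simp add: card_image)
qed

lemma design_2_finite_blocks:
  assumes "design_2 P Bs v k lam"
  shows "finite Bs"
proof -
  have "Bs \<subseteq> Pow P" "finite P"
    using assms unfolding design_2_def by auto
  then show ?thesis
    by (meson finite_Pow_iff finite_subset)
qed

lemma flag_transitive_stabiliser_invariant_count:
  assumes design: "design_2 P Bs v k lam" and repl: "replication P Bs r"
    and flag_tr: "flag_transitive P Bs G" and G_Bij: "G \<subseteq> Bij P"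
    and flag: "p \<in> B" "B \<in> Bs"
    and \<Gamma>: "\<Gamma> \<subseteq> P - {p}"
    and invariant: "\<And>g x. g \<in> G \<Longrightarrow> g p = p \<Longrightarrow> x \<in> P \<Longrightarrow> g x \<in> \<Gamma> \<longleftrightarrow> x \<in> \<Gamma>"
  shows "lam * card \<Gamma> = r * card (B \<inter> \<Gamma>)"
proof -
  define Bp where "Bp = {C \<in> Bs. p \<in> C}"
  have BP: "B \<subseteq> P" and pP: "p \<in> P" and "finite P"
    using design flag unfolding design_2_def by auto
  then have fin: "finite Bp" "finite \<Gamma>"
    using design_2_finite_blocks[OF design] \<Gamma> unfolding Bp_def by (auto intro: finite_subset)
  have "card Bp = r"
    using repl pP unfolding replication_def Bp_def by blast
  have "card {C\<in>Bp. x \<in> C} = lam" if "x \<in> \<Gamma>" for x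
  proof -
    have "{C\<in>Bp. x \<in> C} = {C \<in> Bs. p \<in> C \<and> x \<in> C}"
      unfolding Bp_def by blast
    moreover have "x \<in> P" "x \<noteq> p"
      using that \<Gamma> by auto
    ultimately show ?thesis
      using design pP unfolding design_2_def by simp
  qed
  moreover have "card (C \<inter> \<Gamma>) = card (B \<inter> \<Gamma>)" if "C \<in> Bp" for C
  proof -
    obtain g where g: "g \<in> G" "g p = p" "g ` B = C"
      using flag_tr flag \<open>C \<in> Bp\<close> unfolding flag_transitive_def Bp_def by blast
    then have "inj_on g P"
      using G_Bij by (auto simp: Bij_def bij_betw_def)
    then show ?thesis
      using card_image_inter_invariant[OF _ BP invariant[OF g(1,2)]] g(3) by blast
  qed
  ultimately have "card \<Gamma> * lam = card Bp * card (B \<inter> \<Gamma>)"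
    using sum_card_incidences[OF fin] by simp
  then show ?thesis
    using \<open>card Bp = r\<close> by (simp add: mult.commute)
qed

definition same_row_or_column :: "'a \<times> 'a \<Rightarrow> 'a \<times> 'a \<Rightarrow> bool" where
  "same_row_or_column x y \<longleftrightarrow> fst x = fst y \<or> snd x = snd y"

lemma prod_perm_same_coordinates:
  assumes "g \<in> Bij \<Delta>" "h \<in> Bij \<Delta>" "x \<in> \<Delta> \<times> \<Delta>" "y \<in> \<Delta> \<times> \<Delta>"
  shows "fst (prod_perm \<Delta> g h x) = fst (prod_perm \<Delta> g h y) \<longleftrightarrow> fst x = fst y"
    and "snd (prod_perm \<Delta> g h x) = snd (prod_perm \<Delta> g h y) \<longleftrightarrow> snd x = snd y"
proof -
  have "inj_on g \<Delta>" "inj_on h \<Delta>"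
    using assms(1,2) by (auto simp: Bij_def bij_betw_def)
  then show "fst (prod_perm \<Delta> g h x) = fst (prod_perm \<Delta> g h y) \<longleftrightarrow> fst x = fst y"
    and "snd (prod_perm \<Delta> g h x) = snd (prod_perm \<Delta> g h y) \<longleftrightarrow> snd x = snd y"
    using assms(3,4) by (auto simp: prod_perm_def mem_Times_iff inj_on_def)
qed

lemma wreath2_product_action_same_row_or_column:
  assumes "T0 \<subseteq> Bij \<Delta>" "g \<in> wreath2_product_action \<Delta> T0"
    and x: "x \<in> \<Delta> \<times> \<Delta>" and y: "y \<in> \<Delta> \<times> \<Delta>"
  shows "same_row_or_column (g x) (g y) \<longleftrightarrow> same_row_or_column x y"
proof -
  from assms(2) obtain g1 h1 where gh: "g1 \<in> Bij \<Delta>" "h1 \<in> Bij \<Delta>"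
    and "g = prod_perm \<Delta> g1 h1 \<or> g = compose (\<Delta> \<times> \<Delta>) (prod_perm \<Delta> g1 h1) (swap_perm \<Delta>)"
    using assms(1) unfolding wreath2_product_action_def prod_group_def by blast
  then consider "g = prod_perm \<Delta> g1 h1"
    | "g x = prod_perm \<Delta> g1 h1 (snd x, fst x)" "g y = prod_perm \<Delta> g1 h1 (snd y, fst y)"
    using x y by (auto simp: compose_def swap_perm_def)
  then show ?thesis
  proof cases
    case 1
    then show ?thesis
      using prod_perm_same_coordinates[OF gh x y] by (auto simp: same_row_or_column_def)
  next
    case 2
    have "(snd x, fst x) \<in> \<Delta> \<times> \<Delta>" "(snd y, fst y) \<in> \<Delta> \<times> \<Delta>"
      using x y by auto
    from prod_perm_same_coordinates[OF gh this] 2 show ?thesis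
      by (auto simp: same_row_or_column_def)
  qed
qed

definition rook_neighbours :: "'a set \<Rightarrow> 'a \<times> 'a \<Rightarrow> ('a \<times> 'a) set" where
  "rook_neighbours \<Delta> p = {x \<in> \<Delta> \<times> \<Delta>. x \<noteq> p \<and> same_row_or_column x p}"

definition rook_non_neighbours :: "'a set \<Rightarrow> 'a \<times> 'a \<Rightarrow> ('a \<times> 'a) set" where
  "rook_non_neighbours \<Delta> p = {x \<in> \<Delta> \<times> \<Delta>. \<not> same_row_or_column x p}"

lemma card_rook_neighbours:
  assumes "finite \<Delta>" "p \<in> \<Delta> \<times> \<Delta>"
  shows "card (rook_neighbours \<Delta> p) = 2 * (card \<Delta> - 1)"
proof -
  have "rook_neighbours \<Delta> p = {fst p} \<times> (\<Delta> - {snd p}) \<union> (\<Delta> - {fst p}) \<times> {snd p}"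
    using assms(2) unfolding rook_neighbours_def same_row_or_column_def by auto
  moreover have "card ({fst p} \<times> (\<Delta> - {snd p}) \<union> (\<Delta> - {fst p}) \<times> {snd p})
      = card ({fst p} \<times> (\<Delta> - {snd p})) + card ((\<Delta> - {fst p}) \<times> {snd p})"
    by (rule card_Un_disjoint) (use assms(1) in auto)
  ultimately show ?thesis
    using assms by (auto simp: card_cartesian_product mem_Times_iff)
qed

lemma card_rook_non_neighbours:
  assumes "finite \<Delta>" "p \<in> \<Delta> \<times> \<Delta>"
  shows "card (rook_non_neighbours \<Delta> p) = (card \<Delta> - 1) * (card \<Delta> - 1)"
proof -
  have "rook_non_neighbours \<Delta> p = (\<Delta> - {fst p}) \<times> (\<Delta> - {snd p})"
    unfolding rook_non_neighbours_def same_row_or_column_def by auto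
  then show ?thesis
    using assms by (auto simp: card_cartesian_product mem_Times_iff)
qed

lemma card_inter_rook_neighbours:
  assumes "finite B" "B \<subseteq> \<Delta> \<times> \<Delta>" "p \<in> B"
  shows "card (B \<inter> rook_neighbours \<Delta> p) + 2
    = card {q \<in> B. fst q = fst p} + card {q \<in> B. snd q = snd p}"
proof -
  let ?R = "{q \<in> B. fst q = fst p}" and ?C = "{q \<in> B. snd q = snd p}"
  have "B \<inter> rook_neighbours \<Delta> p = (?R - {p}) \<union> (?C - {p})"
    using assms(2) unfolding rook_neighbours_def same_row_or_column_def by auto
  moreover have "card ((?R - {p}) \<union> (?C - {p})) = card (?R - {p}) + card (?C - {p})"
    by (rule card_Un_disjoint) (use assms(1) in \<open>auto simp: prod_eq_iff\<close>)
  moreover have "card ?R = Suc (card (?R - {p}))" "card ?C = Suc (card (?C - {p}))"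
    by (rule card.remove; use assms(1,3) in simp)+
  ultimately show ?thesis
    by simp
qed

lemma card_split_rook_neighbourhood:
  assumes "finite B" "B \<subseteq> \<Delta> \<times> \<Delta>" "p \<in> B"
  shows "card B = 1 + card (B \<inter> rook_neighbours \<Delta> p) + card (B \<inter> rook_non_neighbours \<Delta> p)"
proof -
  let ?N = "B \<inter> rook_neighbours \<Delta> p" and ?M = "B \<inter> rook_non_neighbours \<Delta> p"
  have "B = insert p (?N \<union> ?M)"
    using assms(2,3) unfolding rook_neighbours_def rook_non_neighbours_def by auto
  moreover have "p \<notin> ?N \<union> ?M" "?N \<inter> ?M = {}"
    unfolding rook_neighbours_def rook_non_neighbours_def same_row_or_column_def by auto
  ultimately show ?thesis
    using assms(1) by (metis card_Un_disjoint card_insert_disjoint finite_Int finite_Un plus_1_eq_Suc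
        add.assoc)
qed

lemma wreath2_stabiliser_preserves_rook_neighbourhoods:
  assumes "T0 \<subseteq> Bij \<Delta>" "G \<subseteq> wreath2_product_action \<Delta> T0" "G \<subseteq> Bij (\<Delta> \<times> \<Delta>)"
    and "p \<in> \<Delta> \<times> \<Delta>" "g \<in> G" "g p = p" "x \<in> \<Delta> \<times> \<Delta>"
  shows "g x \<in> rook_neighbours \<Delta> p \<longleftrightarrow> x \<in> rook_neighbours \<Delta> p"
    and "g x \<in> rook_non_neighbours \<Delta> p \<longleftrightarrow> x \<in> rook_non_neighbours \<Delta> p"
proof -
  have "g \<in> Bij (\<Delta> \<times> \<Delta>)" "g \<in> wreath2_product_action \<Delta> T0"
    using assms(2,3,5) by blast+
  then have "g x \<in> \<Delta> \<times> \<Delta>" "g x = p \<longleftrightarrow> x = p"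
    using assms(4,6,7) by (auto simp: Bij_def bij_betw_def inj_on_eq_iff[of g "\<Delta> \<times> \<Delta>" x p, symmetric])
  moreover have "same_row_or_column (g x) p \<longleftrightarrow> same_row_or_column x p"
    using wreath2_product_action_same_row_or_column[OF assms(1) \<open>g \<in> wreath2_product_action \<Delta> T0\<close> assms(7,4)]
      assms(6) by simp
  ultimately show "g x \<in> rook_neighbours \<Delta> p \<longleftrightarrow> x \<in> rook_neighbours \<Delta> p"
    and "g x \<in> rook_non_neighbours \<Delta> p \<longleftrightarrow> x \<in> rook_non_neighbours \<Delta> p"
    using assms(7) unfolding rook_neighbours_def rook_non_neighbours_def by auto
qed

text \<open>The two counting equations, with w = \<omega> - 1, m = |B \<inter> neighbours| and
  n = |B \<inter> non-neighbours|.\<close>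
lemma ratio_from_counts:
  fixes lam r m n w :: nat
  assumes "lam * (2 * w) = r * m" "lam * (w * w) = r * n" "lam > 0" "w > 0"
  shows "m * w = 2 * n"
proof -
  have "r > 0"
    using assms(1,3,4) by (metis mult_is_0 neq0_conv zero_neq_numeral)
  moreover have "r * (m * w) = r * (2 * n)"
    using assms(1,2) by (metis mult.assoc mult.left_commute)
  ultimately show ?thesis
    by simp
qed

lemma block_size_from_ratio:
  fixes k m n c d \<omega> :: nat
  assumes "k = 1 + m + n" "m * (\<omega> - 1) = 2 * n" "m + 2 = c + d" "\<omega> \<ge> 1"
  shows "real k = (real c + real d - 2) * (real \<omega> + 1) / 2 + 1"
proof -
  have "real m * (real \<omega> - 1) = 2 * real n"
    using assms(2,4) by (metis of_nat_1 of_nat_diff of_nat_mult of_nat_numeral)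
  moreover have "real m = real c + real d - 2"
    using assms(3) by (metis add_diff_cancel_right' of_nat_add of_nat_numeral)
  ultimately show ?thesis
    using assms(1) by (simp add: field_simps)
qed

theorem lemma2p2:
  fixes \<Delta> :: "'a set" and \<omega> :: nat
    and Bs :: "('a \<times> 'a) set set" and v k lam b r :: nat
    and G :: "('a \<times> 'a \<Rightarrow> 'a \<times> 'a) set"
    and T0 T :: "('a \<Rightarrow> 'a) set"
    and \<alpha> \<beta> :: 'a and B :: "('a \<times> 'a) set"
  assumes card_Delta: "card \<Delta> = \<omega>" and omega_ge: "\<omega> \<ge> 5" and omega_odd: "odd \<omega>"
    and design: "design_2 (\<Delta> \<times> \<Delta>) Bs v k lam" and lambda_pos: "lam > 0"
    and nontriv: "2 < k" "k < v"
    and b_def: "b = card Bs"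
    and repl: "replication (\<Delta> \<times> \<Delta>) Bs r"
    and lambda_ge: "(gcd r lam)\<^sup>2 \<le> lam"
    and G_sub: "subgroup G (BijGroup (\<Delta> \<times> \<Delta>))"
    and G_aut: "\<forall>g\<in>G. is_automorphism (\<Delta> \<times> \<Delta>) Bs g"
    and G_flag: "flag_transitive (\<Delta> \<times> \<Delta>) Bs G"
    and T0_sub: "subgroup T0 (BijGroup \<Delta>)"
    and T0_2tr: "two_transitive \<Delta> T0"
    and T_socle: "T = socle ((BijGroup \<Delta>)\<lparr>carrier := T0\<rparr>)"
    and T_simple: "simple_group ((BijGroup \<Delta>)\<lparr>carrier := T\<rparr>)"
    and T_nonab: "\<not> comm_group ((BijGroup \<Delta>)\<lparr>carrier := T\<rparr>)"
    and TT_normal: "prod_group \<Delta> T T \<lhd> (BijGroup (\<Delta> \<times> \<Delta>))\<lparr>carrier := G\<rparr>"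
    and G_wreath: "G \<subseteq> wreath2_product_action \<Delta> T0"
    and G_rank3: "has_rank (\<Delta> \<times> \<Delta>) G 3"
    and flag: "(\<alpha>, \<beta>) \<in> B" "B \<in> Bs"
  shows "real k = (real (card {q \<in> B. fst q = \<alpha>}) + real (card {q \<in> B. snd q = \<beta>}) - 2)
                   * (real \<omega> + 1) / 2 + 1"
proof -
  let ?N = "rook_neighbours \<Delta> (\<alpha>, \<beta>)" and ?M = "rook_non_neighbours \<Delta> (\<alpha>, \<beta>)"
  have P: "finite (\<Delta> \<times> \<Delta>)" "B \<subseteq> \<Delta> \<times> \<Delta>" "card B = k"
    using design flag unfolding design_2_def by auto
  then have fin: "finite \<Delta>" "finite B" "(\<alpha>, \<beta>) \<in> \<Delta> \<times> \<Delta>"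
    using flag by (auto dest: finite_cartesian_productD1 intro: finite_subset)
  have T0_Bij: "T0 \<subseteq> Bij \<Delta>" and G_Bij: "G \<subseteq> Bij (\<Delta> \<times> \<Delta>)"
    using subgroup.subset[OF T0_sub] subgroup.subset[OF G_sub] by (auto simp: BijGroup_def)
  note count = flag_transitive_stabiliser_invariant_count[OF design repl G_flag G_Bij flag]
  note invariant = wreath2_stabiliser_preserves_rook_neighbourhoods[OF T0_Bij G_wreath G_Bij fin(3)]
  have "?N \<subseteq> \<Delta> \<times> \<Delta> - {(\<alpha>, \<beta>)}" "?M \<subseteq> \<Delta> \<times> \<Delta> - {(\<alpha>, \<beta>)}"
    unfolding rook_neighbours_def rook_non_neighbours_def same_row_or_column_def by auto
  then have "lam * card ?N = r * card (B \<inter> ?N)" "lam * card ?M = r * card (B \<inter> ?M)"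
    using count invariant by blast+
  then have "card (B \<inter> ?N) * (\<omega> - 1) = 2 * card (B \<inter> ?M)"
    using card_rook_neighbours[OF fin(1,3)] card_rook_non_neighbours[OF fin(1,3)] card_Delta omega_ge
    by (intro ratio_from_counts[OF _ _ lambda_pos]) auto
  then show ?thesis
    using block_size_from_ratio card_split_rook_neighbourhood[OF fin(2) P(2) flag(1)]
      card_inter_rook_neighbours[OF fin(2) P(2) flag(1)] P(3) omega_ge by simp
qed

end
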